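(* Let $k$ be a field of characteristic zero in which every element admits an $n$th root. Then for every multiplicatively alternating matrix $q\in M_n(k)$ there exists $\tau\in(k^\times)^n$ such that the matrix $\tau q\tau^{-1}$, with entries $\frac{\tau_i}{\tau_j}q_{ij}$, is normalized.
   Context: A matrix $q\in M_n(k)$ is multiplicatively alternating if all entries are invertible, $q_{ii}=1$ and $q_{ij}=q_{ji}^{-1}$. It is normalized if $\prod_jq_{ij}=1$ for all $i$. *)

theory Defs
  imports Main
begin

text \<open>n x n matrices over k are represented as functions nat => nat => k,
  with indices ranging over {0..<n}.\<close>

definition mult_alternating :: "nat \<Rightarrow> (nat \<Rightarrow> nat \<Rightarrow> 'a::field) \<Rightarrow> bool" where
  "mult_alternating n q \<longleftrightarrow>
     (\<forall>i<n. \<forall>j<n. q i j \<noteq> 0) \<and>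
     (\<forall>i<n. q i i = 1) \<and>
     (\<forall>i<n. \<forall>j<n. q i j = inverse (q j i))"

definition normalized :: "nat \<Rightarrow> (nat \<Rightarrow> nat \<Rightarrow> 'a::field) \<Rightarrow> bool" where
  "normalized n q \<longleftrightarrow> (\<forall>i<n. (\<Prod>j<n. q i j) = 1)"

end

theory Submission
  imports Defs
begin

text \<open>The row products \<open>r i\<close> of an alternating matrix multiply to 1, and conjugating by \<open>\<tau>\<close>
  multiplies \<open>r i\<close> by \<open>\<tau> i ^ n / (\<Prod>j. \<tau> j)\<close>. So it suffices to find \<open>n\<close>-th roots \<open>\<tau> i\<close> of
  \<open>1 / r i\<close> whose product is 1: any choice of roots has a product \<open>P\<close> with \<open>P ^ n = 1\<close>, and
  dividing one root by \<open>P\<close> fixes the product without changing its \<open>n\<close>-th power.\<close>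

lemma mult_alternating_prod_entries:
  fixes q :: "nat \<Rightarrow> nat \<Rightarrow> 'k::field"
  assumes alt: "mult_alternating n q" and "m \<le> n"
  shows "(\<Prod>i<m. \<Prod>j<m. q i j) = 1"
  using \<open>m \<le> n\<close>
proof (induction m)
  case 0
  then show ?case by simp
next
  case (Suc m)
  have "m < n" using Suc.prems by simp
  have q_pair: "q i m * q m i = 1" if "i < m" for i
    using alt \<open>m < n\<close> that unfolding mult_alternating_def by (metis order.strict_trans right_inverse)
  have q_diag: "q m m = 1"
    using alt \<open>m < n\<close> unfolding mult_alternating_def by blast
  have "(\<Prod>i<Suc m. \<Prod>j<Suc m. q i j)
      = (\<Prod>i<m. \<Prod>j<m. q i j) * (\<Prod>i<m. q i m * q m i) * q m m"
    by (simp add: prod.distrib algebra_simps)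
  also have "\<dots> = 1"
    using Suc q_pair q_diag by simp
  finally show ?case .
qed

lemma prod_row_conjugate:
  fixes q :: "nat \<Rightarrow> nat \<Rightarrow> 'k::field"
  shows "(\<Prod>j<n. (\<tau> i / \<tau> j) * q i j) = \<tau> i ^ n / (\<Prod>j<n. \<tau> j) * (\<Prod>j<n. q i j)"
  by (simp add: prod.distrib prod_dividef)

lemma nth_roots_with_prod_one:
  fixes c :: "'a \<Rightarrow> 'k::field"
  assumes roots: "\<forall>a::'k. \<exists>b. b ^ m = a"
    and "finite I" and prod_c: "(\<Prod>i\<in>I. c i) = 1"
  shows "\<exists>\<tau>. (\<forall>i\<in>I. \<tau> i ^ m = c i) \<and> (\<Prod>i\<in>I. \<tau> i) = 1"
proof (cases "I = {}")
  case True
  then show ?thesis by simp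
next
  case False
  then obtain i\<^sub>0 where "i\<^sub>0 \<in> I" by blast
  have "\<forall>i. \<exists>b. b ^ m = c i"
    using roots by blast
  then obtain x where x: "\<And>i. x i ^ m = c i"
    by metis
  define P where "P = (\<Prod>i\<in>I. x i)"
  have "P ^ m = 1"
    using prod_c unfolding P_def by (simp add: prod_power_distrib x)
  moreover have "m > 0"
  proof -
    obtain b :: 'k where "b ^ m = 0"
      using roots by blast
    then show ?thesis by (cases m) auto
  qed
  ultimately have "P \<noteq> 0" by (metis power_0_left zero_neq_one less_not_refl)
  define \<tau> where "\<tau> = x(i\<^sub>0 := x i\<^sub>0 / P)"
  have "\<forall>i\<in>I. \<tau> i ^ m = c i"
    unfolding \<tau>_def using \<open>P ^ m = 1\<close> by (simp add: power_divide x)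
  moreover have "(\<Prod>i\<in>I. \<tau> i) = 1"
  proof -
    have "(\<Prod>i\<in>I. \<tau> i) = x i\<^sub>0 / P * (\<Prod>i\<in>I - {i\<^sub>0}. x i)"
      unfolding \<tau>_def using \<open>finite I\<close> \<open>i\<^sub>0 \<in> I\<close> by (simp add: prod.remove)
    also have "\<dots> = P / P"
      unfolding P_def using \<open>finite I\<close> \<open>i\<^sub>0 \<in> I\<close> by (simp add: prod.remove)
    finally show ?thesis using \<open>P \<noteq> 0\<close> by simp
  qed
  ultimately show ?thesis by blast
qed

theorem lemma2p9:
  fixes n :: nat and q :: "nat \<Rightarrow> nat \<Rightarrow> 'k::field_char_0"
  assumes roots: "\<forall>a::'k. \<exists>b. b ^ n = a"
    and alt: "mult_alternating n q"
  shows "\<exists>\<tau> :: nat \<Rightarrow> 'k. (\<forall>i<n. \<tau> i \<noteq> 0) \<and>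
           normalized n (\<lambda>i j. (\<tau> i / \<tau> j) * q i j)"
proof -
  define r where "r i = (\<Prod>j<n. q i j)" for i
  have prod_r: "(\<Prod>i<n. r i) = 1"
    unfolding r_def using mult_alternating_prod_entries[OF alt order.refl] .
  then have r_nonzero: "r i \<noteq> 0" if "i < n" for i
    using that by (metis finite_lessThan lessThan_iff prod_zero_iff zero_neq_one)
  have "(\<Prod>i<n. inverse (r i)) = 1"
    using prod_inversef[of r "{..<n}"] prod_r by (simp add: o_def)
  then obtain \<tau> where \<tau>_pow: "\<forall>i<n. \<tau> i ^ n = inverse (r i)" and prod_\<tau>: "(\<Prod>i<n. \<tau> i) = 1"
    using nth_roots_with_prod_one[OF roots, of "{..<n}" "\<lambda>i. inverse (r i)"] by auto
  have "\<forall>i<n. \<tau> i \<noteq> 0"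
    using prod_\<tau> by (metis finite_lessThan lessThan_iff prod_zero_iff zero_neq_one)
  moreover have "normalized n (\<lambda>i j. (\<tau> i / \<tau> j) * q i j)"
    unfolding normalized_def prod_row_conjugate
    using \<tau>_pow prod_\<tau> r_nonzero by (simp flip: r_def)
  ultimately show ?thesis by blast
qed

end
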